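(* Define, for $m,n\ge1$, $\widetilde G_{m,n}(a)=G_{m,n}(a)+\sum_{j=0}^{m-2}G_{n-1,j+2}(a)\,G_{m-j-1,2}(a)$. Then \[ \sum_{m\ge1}\sum_{n\ge1}\widetilde G_{m,n+1}(a)x^my^n=\frac{-yL(a,-x)+xL(a,-y)}{-L(a,-x)+L(a,-y)}\left(\frac{-yL(a,-x)-xL(a,-y)}{xy}-1\right), \] and consequently $\widetilde G_{m,n}(a)=\widetilde G_{n-1,m+1}(a)$ for all $m\ge1$, $n\ge2$.
   Context: Let $L(a,t)=\sum_{n\ge1}\lambda_n(a)t^n\in\mathbb Q[a][[t]]$ be the compositional inverse (in $t$) of $e^{-at}(e^t-1)$, equivalently the unique such series with $e^{L(a,t)}(1-te^{(a-1)L(a,t)})=1$. The generalized Gregory polynomials $G_{m,n}(a)$ are defined by $\sum_{m,n\ge0}G_{m,n}(a)x^my^n=\dfrac{yL(a,-x)^2-xL(a,-y)^2}{-L(a,-x)+L(a,-y)}$. *)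

theory Defs
  imports "HOL-Computational_Algebra.Formal_Power_Series"
begin

(* The parameter a ranges over an arbitrary field of characteristic 0
   (e.g. rat, or the fraction field of rat poly, where a = the indeterminate). *)

definition gregL :: "'a::field_char_0 \<Rightarrow> 'a fps" where
  "gregL a = fps_inv (fps_exp (- a) * (fps_exp 1 - 1))"

definition fps_neg_arg :: "'a::comm_ring_1 fps \<Rightarrow> 'a fps" where
  "fps_neg_arg f = Abs_fps (\<lambda>n. (-1) ^ n * fps_nth f n)"

(* Bivariate power series in x,y: elements of ('a fps) fps, outer variable y,
   inner variable x. The series sum c(m,n) x^m y^n is bfps c. *)
definition bfps :: "(nat \<Rightarrow> nat \<Rightarrow> 'a::zero) \<Rightarrow> 'a fps fps" where
  "bfps c = Abs_fps (\<lambda>n. Abs_fps (\<lambda>m. c m n))"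

definition bcoeff :: "'a::zero fps fps \<Rightarrow> nat \<Rightarrow> nat \<Rightarrow> 'a" where
  "bcoeff F m n = fps_nth (fps_nth F n) m"

definition bX :: "'a::comm_ring_1 fps fps" where
  "bX = fps_const fps_X"

definition bY :: "'a::comm_ring_1 fps fps" where
  "bY = fps_X"

definition in_x :: "'a::comm_ring_1 fps \<Rightarrow> 'a fps fps" where
  "in_x f = fps_const f"

definition in_y :: "'a::comm_ring_1 fps \<Rightarrow> 'a fps fps" where
  "in_y f = Abs_fps (\<lambda>n. fps_const (fps_nth f n))"

definition bdiv :: "'a::idom fps fps \<Rightarrow> 'a fps fps \<Rightarrow> 'a fps fps" where
  "bdiv N D = (THE H. H * D = N)"

definition Lmx :: "'a::field_char_0 \<Rightarrow> 'a fps fps" where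
  "Lmx a = in_x (fps_neg_arg (gregL a))"

definition Lmy :: "'a::field_char_0 \<Rightarrow> 'a fps fps" where
  "Lmy a = in_y (fps_neg_arg (gregL a))"

definition gregG :: "'a::field_char_0 \<Rightarrow> nat \<Rightarrow> nat \<Rightarrow> 'a" where
  "gregG a m n = bcoeff (bdiv (bY * (Lmx a)^2 - bX * (Lmy a)^2) (- Lmx a + Lmy a)) m n"

(* \<tilde>G_{m,n}(a) for m,n \<ge> 1; the sum j = 0..m-2 is written j < m - 1 *)
definition gregGt :: "'a::field_char_0 \<Rightarrow> nat \<Rightarrow> nat \<Rightarrow> 'a" where
  "gregGt a m n = gregG a m n + (\<Sum>j<m - 1. gregG a (n - 1) (j + 2) * gregG a (m - j - 1) 2)"

end

theory Submission
  imports Defs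
begin

(*
  Write u = L(a,-x) and v = L(a,-y). Since (v - u)/(x - y) is a unit, every quotient in the
  statement exists, and the generating function G of the G_{m,n} as well as the two factors
  A and B on the right-hand side are invariant under x <-> y. Comparing the coefficients of
  y^0, y^1, y^2 in G (v - u) = y u^2 - x v^2 gives G_{m,0} = 0, G_{m,1} = -[x^m] u and
  G_{.,2}(x) u = u + x. Hence the first term of the tilde-G series is (G + y u)/y and the
  convolution term is G_{.,2}(x) (G + x v)/x, and the claimed identity becomes a ring
  identity after multiplying by x y u (v - u). The symmetry of the coefficients is then
  that of A (B - 1).
*)

unbundle fps_syntax

lemma bcoeff_bfps [simp]: "bcoeff (bfps c) m n = c m n"
  by (simp add: bcoeff_def bfps_def)

lemma bcoeff_eqI: "(\<And>m n. bcoeff F m n = bcoeff G m n) \<Longrightarrow> F = G"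
  unfolding bcoeff_def by (intro fps_ext) auto

lemma bcoeff_1 [simp]: "bcoeff (1 :: 'a::comm_ring_1 fps fps) m n = (if m = 0 \<and> n = 0 then 1 else 0)"
  by (simp add: bcoeff_def)

lemma bcoeff_add [simp]: "bcoeff (F + G) m n = bcoeff F m n + bcoeff G m n"
  by (simp add: bcoeff_def)

lemma bcoeff_diff [simp]: "bcoeff (F - G :: 'a::ab_group_add fps fps) m n = bcoeff F m n - bcoeff G m n"
  by (simp add: bcoeff_def)

lemma bcoeff_uminus [simp]: "bcoeff (- F :: 'a::ab_group_add fps fps) m n = - bcoeff F m n"
  by (simp add: bcoeff_def)

lemma bcoeff_mult:
  "bcoeff (P * Q :: 'a::comm_ring_1 fps fps) m n =
     (\<Sum>i=0..n. \<Sum>k=0..m. bcoeff P k i * bcoeff Q (m - k) (n - i))"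
  by (simp add: bcoeff_def fps_mult_nth fps_sum_nth)

lemma bcoeff_bX: "bcoeff (bX :: 'a::comm_ring_1 fps fps) m n = (if m = 1 \<and> n = 0 then 1 else 0)"
  by (simp add: bcoeff_def bX_def)

lemma bcoeff_bY: "bcoeff (bY :: 'a::comm_ring_1 fps fps) m n = (if m = 0 \<and> n = 1 then 1 else 0)"
  by (simp add: bcoeff_def bY_def)

lemma bcoeff_bX_mult [simp]:
  "bcoeff (bX * P :: 'a::comm_ring_1 fps fps) m n = (if m = 0 then 0 else bcoeff P (m - 1) n)"
  by (simp add: bcoeff_def bX_def fps_X_mult_nth)

lemma bcoeff_bY_mult [simp]:
  "bcoeff (bY * P :: 'a::comm_ring_1 fps fps) m n = (if n = 0 then 0 else bcoeff P m (n - 1))"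
  by (simp add: bcoeff_def bY_def fps_X_mult_nth)

lemma bcoeff_in_x [simp]: "bcoeff (in_x f) m n = (if n = 0 then f $ m else 0)"
  by (simp add: bcoeff_def in_x_def)

lemma bcoeff_in_y [simp]: "bcoeff (in_y f) m n = (if m = 0 then f $ n else 0)"
  by (simp add: bcoeff_def in_y_def)

lemma bcoeff_in_x_mult:
  "bcoeff (in_x c * P :: 'a::comm_ring_1 fps fps) m n = (\<Sum>k=0..m. c $ k * bcoeff P (m - k) n)"
  by (simp only: bcoeff_def in_x_def fps_mult_left_const_nth) (simp add: fps_mult_nth)

lemma bX_nonzero: "(bX :: 'a::comm_ring_1 fps fps) \<noteq> 0"
  by (simp add: bX_def)

lemma bY_nonzero: "(bY :: 'a::comm_ring_1 fps fps) \<noteq> 0"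
  by (simp add: bY_def)

lemma in_x_mult: "in_x (f * g) = in_x f * in_x g"
  by (simp add: in_x_def)

lemma in_x_X: "in_x fps_X = bX"
  by (simp add: in_x_def bX_def)

lemma in_y_X: "in_y (fps_X :: 'a::comm_ring_1 fps) = bY"
  by (rule bcoeff_eqI) (auto simp add: bcoeff_bY)

definition bswap :: "'a::zero fps fps \<Rightarrow> 'a fps fps" where
  "bswap F = bfps (\<lambda>m n. bcoeff F n m)"

lemma bcoeff_bswap [simp]: "bcoeff (bswap F) m n = bcoeff F n m"
  by (simp add: bswap_def)

lemma bswap_mult: "bswap (P * Q :: 'a::comm_ring_1 fps fps) = bswap P * bswap Q"
proof (rule bcoeff_eqI)
  fix m n
  have "bcoeff (bswap (P * Q)) m n = (\<Sum>i=0..m. \<Sum>k=0..n. bcoeff P k i * bcoeff Q (n - k) (m - i))"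
    by (simp only: bcoeff_bswap bcoeff_mult)
  also have "\<dots> = (\<Sum>k=0..n. \<Sum>i=0..m. bcoeff P k i * bcoeff Q (n - k) (m - i))"
    by (rule sum.swap)
  also have "\<dots> = bcoeff (bswap P * bswap Q) m n"
    by (simp only: bcoeff_bswap bcoeff_mult)
  finally show "bcoeff (bswap (P * Q)) m n = bcoeff (bswap P * bswap Q) m n" .
qed

lemma bswap_add: "bswap (P + Q) = bswap P + bswap Q"
  by (rule bcoeff_eqI) simp

lemma bswap_diff: "bswap (P - Q :: 'a::ab_group_add fps fps) = bswap P - bswap Q"
  by (rule bcoeff_eqI) simp

lemma bswap_uminus: "bswap (- Q :: 'a::ab_group_add fps fps) = - bswap Q"
  by (rule bcoeff_eqI) simp

lemma bswap_1: "bswap (1 :: 'a::comm_ring_1 fps fps) = 1"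
  by (rule bcoeff_eqI) auto

lemma bswap_bX: "bswap (bX :: 'a::comm_ring_1 fps fps) = bY"
  by (rule bcoeff_eqI) (simp add: bcoeff_bX bcoeff_bY)

lemma bswap_bY: "bswap (bY :: 'a::comm_ring_1 fps fps) = bX"
  by (rule bcoeff_eqI) (simp add: bcoeff_bX bcoeff_bY)

lemma bswap_in_x: "bswap (in_x f) = in_y f"
  by (rule bcoeff_eqI) simp

lemma bswap_in_y: "bswap (in_y f) = in_x f"
  by (rule bcoeff_eqI) simp

lemmas bswap_ring_simps = bswap_add bswap_diff bswap_uminus bswap_mult bswap_1
  bswap_bX bswap_bY bswap_in_x bswap_in_y

lemma in_y_mult: "in_y (f * g :: 'a::comm_ring_1 fps) = in_y f * in_y g"
  by (metis bswap_in_x bswap_mult in_x_mult)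

definition divided_difference :: "'a::zero fps \<Rightarrow> 'a fps fps" where
  "divided_difference h = bfps (\<lambda>m n. h $ (m + n + 1))"

lemma divided_difference_eq: "(bX - bY) * divided_difference h = in_x h - in_y h"
proof (rule bcoeff_eqI)
  fix m n
  show "bcoeff ((bX - bY) * divided_difference h) m n = bcoeff (in_x h - in_y h) m n"
    by (cases m; cases n) (simp_all add: divided_difference_def left_diff_distrib)
qed

lemma divided_difference_invertible:
  fixes h :: "'a::comm_ring_1 fps"
  assumes "h $ 1 * c = 1"
  shows "\<exists>Q. divided_difference h * Q = 1"
proof -
  have "fps_shift 1 h * fps_right_inverse (fps_shift 1 h) c = 1"
    using assms by (intro fps_right_inverse) simp
  moreover have "divided_difference h $ 0 = fps_shift 1 h"
    by (simp add: divided_difference_def bfps_def fps_shift_def)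
  ultimately show ?thesis
    by (metis fps_right_inverse)
qed

lemma bdiv_eqI: "D \<noteq> 0 \<Longrightarrow> H * D = N \<Longrightarrow> bdiv N D = (H :: 'a::idom fps fps)"
  unfolding bdiv_def by (rule the_equality) auto

lemma bswap_eq_of_antisymmetric_quotient:
  fixes D N H :: "'a::idom fps fps"
  assumes "D \<noteq> 0" "H * D = N" "bswap D = - D" "bswap N = - N"
  shows "bswap H = H"
proof -
  have "bswap H * (- D) = - N"
    using assms(2-4) by (metis bswap_mult)
  hence "(bswap H - H) * D = 0"
    using assms(2) by (simp add: algebra_simps)
  thus ?thesis
    using assms(1) by simp
qed

lemma sum_convolution_reindex:
  fixes c g :: "nat \<Rightarrow> 'b::comm_ring_1"
  assumes "c 0 = 0"
  shows "(\<Sum>j<M. g (j + 2) * c (M - j)) =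
         (\<Sum>k=0..M+2. c k * (if 2 \<le> M + 2 - k then g (M + 2 - k) else 0))"
proof -
  define F where "F k = c k * (if 2 \<le> M + 2 - k then g (M + 2 - k) else 0)" for k
  have "(\<Sum>k=0..M+2. F k) = (\<Sum>k<Suc M. F k)"
    by (simp add: atLeast0AtMost lessThan_Suc_atMost[symmetric] F_def)
  also have "\<dots> = (\<Sum>k<Suc M. c k * g (M + 2 - k))"
    by (rule sum.cong) (auto simp: F_def)
  also have "\<dots> = (\<Sum>i<Suc M. c (M - i) * g (i + 2))"
    by (subst sum.nat_diff_reindex[symmetric]) (intro sum.cong; auto simp: Suc_diff_le)
  also have "\<dots> = (\<Sum>j<M. g (j + 2) * c (M - j))"
    by (simp add: assms mult.commute)
  finally show ?thesis
    by (simp add: F_def)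
qed

locale gregory_series =
  fixes f :: "'a::idom fps"
  assumes f_0: "f $ 0 = 0" and f_1: "f $ 1 = -1"
begin

definition D :: "'a fps fps" where
  "D = - in_x f + in_y f"

definition G :: "'a fps fps" where
  "G = bdiv (bY * (in_x f)^2 - bX * (in_y f)^2) D"

definition A :: "'a fps fps" where
  "A = bdiv (- bY * in_x f + bX * in_y f) D"

definition B :: "'a fps fps" where
  "B = bdiv (- bY * in_x f - bX * in_y f) (bX * bY)"

definition Gt :: "nat \<Rightarrow> nat \<Rightarrow> 'a" where
  "Gt m n = bcoeff G m n + (\<Sum>j<m - 1. bcoeff G (n - 1) (j + 2) * bcoeff G (m - j - 1) 2)"

lemma f_eq: "f = fps_X * fps_shift 1 f"
  by (rule fps_ext) (simp add: f_0 fps_X_mult_nth)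

lemma f_nonzero: "f \<noteq> 0"
  using f_1 by auto

lemma in_x_f_nonzero: "in_x f \<noteq> 0"
  using f_nonzero by (simp add: in_x_def)

lemma divided_difference_f_unit: "\<exists>Q. divided_difference f * Q = 1"
  by (rule divided_difference_invertible[where c = "-1"]) (use f_1 in simp)

lemma D_eq: "D = - ((bX - bY) * divided_difference f)"
  by (simp add: D_def divided_difference_eq)

lemma D_nonzero: "D \<noteq> 0"
proof -
  have "bcoeff (bX - bY :: 'a fps fps) 1 0 = 1"
    by (simp add: bcoeff_bX bcoeff_bY)
  hence "(bX - bY :: 'a fps fps) \<noteq> 0"
    by auto
  moreover have "divided_difference f \<noteq> 0"
    using divided_difference_f_unit by auto
  ultimately show ?thesis
    by (simp add: D_eq)
qed

lemma in_x_f: "in_x f = bX * in_x (fps_shift 1 f)"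
  by (subst f_eq) (simp add: in_x_mult in_x_X)

lemma in_y_f: "in_y f = bY * in_y (fps_shift 1 f)"
  by (subst f_eq) (simp add: in_y_mult in_y_X)

lemma G_mult_D: "G * D = bY * (in_x f)^2 - bX * (in_y f)^2"
proof -
  obtain Q where Q: "divided_difference f * Q = 1"
    using divided_difference_f_unit by blast
  define g where "g = fps_shift 1 f"
  have "(bX - bY) * divided_difference (fps_X * g^2) = bX * (in_x g)^2 - bY * (in_y g)^2"
    by (simp add: divided_difference_eq in_x_mult in_y_mult in_x_X in_y_X power2_eq_square)
  hence quotient: "(- (bX * bY * divided_difference (fps_X * g^2) * Q)) * D =
      bY * (in_x f)^2 - bX * (in_y f)^2"
    unfolding D_eq in_x_f in_y_f g_def[symmetric] using Q by algebra
  hence "G = - (bX * bY * divided_difference (fps_X * g^2) * Q)"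
    unfolding G_def by (rule bdiv_eqI[OF D_nonzero])
  with quotient show ?thesis
    by simp
qed

lemma A_mult_D: "A * D = - bY * in_x f + bX * in_y f"
proof -
  obtain Q where Q: "divided_difference f * Q = 1"
    using divided_difference_f_unit by blast
  define g where "g = fps_shift 1 f"
  have "(bX - bY) * divided_difference g = in_x g - in_y g"
    by (rule divided_difference_eq)
  hence quotient: "(bX * bY * divided_difference g * Q) * D = - bY * in_x f + bX * in_y f"
    unfolding D_eq in_x_f in_y_f g_def[symmetric] using Q by algebra
  hence "A = bX * bY * divided_difference g * Q"
    unfolding A_def by (rule bdiv_eqI[OF D_nonzero])
  with quotient show ?thesis
    by simp
qed

lemma B_eq: "B = - in_x (fps_shift 1 f) - in_y (fps_shift 1 f)"
  unfolding B_def by (rule bdiv_eqI) (simp_all add: bX_nonzero bY_nonzero in_x_f in_y_f algebra_simps)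

lemma bswap_D: "bswap D = - D"
  by (simp add: D_def bswap_ring_simps)

lemma bswap_G: "bswap G = G"
  by (rule bswap_eq_of_antisymmetric_quotient[OF D_nonzero G_mult_D bswap_D])
     (simp add: bswap_ring_simps power2_eq_square)

lemma bswap_A: "bswap A = A"
  by (rule bswap_eq_of_antisymmetric_quotient[OF D_nonzero A_mult_D bswap_D])
     (simp add: bswap_ring_simps)

lemma bswap_B: "bswap B = B"
  by (simp add: B_eq bswap_ring_simps)

lemma f_square_nth: "(f^2) $ 0 = 0" "(f^2) $ 1 = 0" "(f^2) $ 2 = 1"
proof -
  have "f^2 = fps_X^2 * (fps_shift 1 f)^2"
    by (subst f_eq) (simp add: power_mult_distrib)
  moreover have "((fps_shift 1 f)^2) $ 0 = 1"
    using f_1 by (simp add: power2_eq_square)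
  ultimately show "(f^2) $ 0 = 0" "(f^2) $ 1 = 0" "(f^2) $ 2 = 1"
    by (simp_all add: fps_X_power_mult_nth)
qed

lemma G_mult_D_nth: "(G * D) $ 0 = 0" "(G * D) $ 1 = f^2" "(G * D) $ 2 = - fps_X"
proof -
  have "G * D = bY * in_x (f^2) - fps_const fps_X * in_y (f^2)"
    by (simp add: G_mult_D in_x_mult in_y_mult power2_eq_square bX_def)
  thus "(G * D) $ 0 = 0" "(G * D) $ 1 = f^2" "(G * D) $ 2 = - fps_X"
    using f_square_nth by (simp_all add: bY_def in_x_def in_y_def numeral_2_eq_2)
qed

lemma D_nth: "D $ 0 = - f" "D $ Suc 0 = -1"
  using f_0 f_1 by (simp_all add: D_def in_x_def in_y_def flip: fps_const_neg)

lemma G_nth_0: "G $ 0 = 0"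
proof -
  have "G $ 0 * - f = 0"
    using G_mult_D_nth(1) by (simp add: D_nth)
  thus ?thesis
    using f_nonzero by simp
qed

lemma G_nth_1: "G $ Suc 0 = - f"
proof -
  have "(G * D) $ Suc 0 = G $ Suc 0 * (- f)"
    by (simp add: fps_mult_nth D_nth G_nth_0)
  hence "(- (G $ Suc 0)) * f = f * f"
    using G_mult_D_nth(2) by (simp add: power2_eq_square)
  hence "- (G $ Suc 0) = f"
    by (rule mult_right_cancel[OF f_nonzero, THEN iffD1])
  thus ?thesis
    by (metis minus_minus)
qed

lemma G_nth_2: "G $ 2 * f = f + fps_X"
proof -
  have "(G * D) $ 2 = G $ 0 * D $ 2 + G $ Suc 0 * D $ Suc 0 + G $ 2 * D $ 0"
    by (simp add: fps_mult_nth numeral_2_eq_2)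
  also have "\<dots> = f - G $ 2 * f"
    by (simp add: G_nth_0 G_nth_1 D_nth)
  finally show ?thesis
    using G_mult_D_nth(3) by (simp add: algebra_simps)
qed

lemma bcoeff_G_sym: "bcoeff G m n = bcoeff G n m"
  by (metis bcoeff_bswap bswap_G)

lemma bcoeff_G_0: "bcoeff G m 0 = 0" "bcoeff G 0 n = 0"
proof -
  show "bcoeff G m 0 = 0" for m
    by (simp add: bcoeff_def G_nth_0)
  thus "bcoeff G 0 n = 0"
    by (subst bcoeff_G_sym)
qed

lemma bcoeff_G_1: "bcoeff G m (Suc 0) = - (f $ m)" "bcoeff G (Suc 0) n = - (f $ n)"
proof -
  show "bcoeff G m (Suc 0) = - (f $ m)" for m
    using G_nth_1 by (simp add: bcoeff_def)
  thus "bcoeff G (Suc 0) n = - (f $ n)"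
    by (subst bcoeff_G_sym)
qed

definition G_shift :: "'a fps fps" where
  "G_shift = bfps (\<lambda>m n. if 1 \<le> m \<and> 1 \<le> n then bcoeff G m (n + 1) else 0)"

definition G_convolution :: "'a fps fps" where
  "G_convolution = bfps (\<lambda>m n. if 1 \<le> m \<and> 1 \<le> n
     then (\<Sum>j<m - 1. bcoeff G n (j + 2) * bcoeff G (m - j - 1) 2) else 0)"

lemma bY_mult_G_shift: "bY * G_shift = G + bY * in_x f"
proof (rule bcoeff_eqI)
  fix m n
  show "bcoeff (bY * G_shift) m n = bcoeff (G + bY * in_x f) m n"
  proof (cases n)
    case 0
    thus ?thesis
      by (simp add: bcoeff_G_0)
  next
    case (Suc k)
    thus ?thesis
      by (cases k; cases m) (simp_all add: G_shift_def bcoeff_G_0 bcoeff_G_1)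
  qed
qed

lemma bcoeff_G_plus_bX_in_y_f:
  "bcoeff (G + bX * in_y f) i n = (if 2 \<le> i then bcoeff G i n else 0)"
proof (cases i)
  case 0
  thus ?thesis
    by (simp add: bcoeff_G_0)
next
  case (Suc k)
  thus ?thesis
    by (cases k) (simp_all add: bcoeff_G_1)
qed

lemma bX_mult_G_convolution: "bX * G_convolution = in_x (G $ 2) * (G + bX * in_y f)"
proof (rule bcoeff_eqI)
  fix m n
  have rhs: "bcoeff (in_x (G $ 2) * (G + bX * in_y f)) m n =
      (\<Sum>k=0..m. bcoeff G k 2 * (if 2 \<le> m - k then bcoeff G (m - k) n else 0))"
    unfolding bcoeff_in_x_mult bcoeff_G_plus_bX_in_y_f by (simp add: bcoeff_def)
  show "bcoeff (bX * G_convolution) m n = bcoeff (in_x (G $ 2) * (G + bX * in_y f)) m n"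
  proof (cases "2 \<le> m \<and> 1 \<le> n")
    case True
    then obtain M where M: "m = M + 2"
      by (metis add.commute le_Suc_ex)
    have "bcoeff (bX * G_convolution) m n = (\<Sum>j<M. bcoeff G n (j + 2) * bcoeff G (M - j) 2)"
      using True M by (simp add: G_convolution_def)
    also have "\<dots> = (\<Sum>j<M. bcoeff G (j + 2) n * bcoeff G (M - j) 2)"
      by (simp add: bcoeff_G_sym[of n])
    also have "\<dots> = (\<Sum>k=0..M+2. bcoeff G k 2 *
        (if 2 \<le> M + 2 - k then bcoeff G (M + 2 - k) n else 0))"
      by (rule sum_convolution_reindex) (simp add: bcoeff_G_0)
    finally show ?thesis
      using rhs unfolding M by simp
  next
    case False
    hence "bcoeff (bX * G_convolution) m n = 0"
      by (auto simp: G_convolution_def)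
    moreover have "bcoeff (in_x (G $ 2) * (G + bX * in_y f)) m n = 0"
      unfolding rhs using False by (intro sum.neutral) (cases n; auto simp: bcoeff_G_0)
    ultimately show ?thesis
      by simp
  qed
qed

lemma in_x_G_nth_2: "in_x (G $ 2) * in_x f = in_x f + bX"
  by (simp add: in_x_def bX_def G_nth_2)

lemma generating_function:
  "bfps (\<lambda>m n. if 1 \<le> m \<and> 1 \<le> n then Gt m (n + 1) else 0) = A * (B - 1)"
proof -
  have "bfps (\<lambda>m n. if 1 \<le> m \<and> 1 \<le> n then Gt m (n + 1) else 0) = G_shift + G_convolution"
    by (rule bcoeff_eqI) (simp add: Gt_def G_shift_def G_convolution_def)
  moreover have "bX * bY * in_x f * D * (G_shift + G_convolution) =
      bX * bY * in_x f * D * (A * (B - 1))"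
    using D_def G_mult_D bY_mult_G_shift bX_mult_G_convolution in_x_G_nth_2 A_mult_D
    unfolding B_eq in_x_f in_y_f by algebra
  moreover have "bX * bY * in_x f * D \<noteq> 0"
    using bX_nonzero bY_nonzero in_x_f_nonzero D_nonzero by simp
  ultimately show ?thesis
    by simp
qed

lemma Gt_symmetric:
  assumes "1 \<le> m" "2 \<le> n"
  shows "Gt m n = Gt (n - 1) (m + 1)"
proof -
  have "bswap (A * (B - 1)) = A * (B - 1)"
    by (simp add: bswap_mult bswap_diff bswap_1 bswap_A bswap_B)
  moreover obtain k where "n = Suc (Suc k)"
    using assms(2) by (metis add_2_eq_Suc le_Suc_ex)
  ultimately show ?thesis
    using assms(1) bcoeff_bswap[of "A * (B - 1)" m "Suc k"] by (simp flip: generating_function)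
qed

end

lemma gregL_nth_0: "gregL a $ 0 = 0"
  by (simp add: gregL_def fps_inv_def)

lemma gregL_nth_1: "gregL (a :: 'a::field_char_0) $ 1 = 1"
proof -
  define g :: "'a fps" where "g = fps_exp (- a) * (fps_exp 1 - 1)"
  have "g $ 1 = 1"
    by (simp add: g_def fps_mult_nth)
  moreover have "gregL a $ 1 = compinv g (Suc 0)"
    by (simp add: gregL_def g_def fps_inv_def)
  ultimately show ?thesis
    by simp
qed

theorem lemma6p6:
  fixes a :: "'a::field_char_0"
  shows "bfps (\<lambda>m n. if 1 \<le> m \<and> 1 \<le> n then gregGt a m (n + 1) else 0) =
           bdiv (- bY * Lmx a + bX * Lmy a) (- Lmx a + Lmy a) *
           (bdiv (- bY * Lmx a - bX * Lmy a) (bX * bY) - 1)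
       \<and> (\<forall>m n. 1 \<le> m \<longrightarrow> 2 \<le> n \<longrightarrow> gregGt a m n = gregGt a (n - 1) (m + 1))"
proof -
  interpret gregory_series "fps_neg_arg (gregL a)"
    by unfold_locales (simp_all add: fps_neg_arg_def gregL_nth_0 gregL_nth_1 del: One_nat_def)
  have Gt_eq: "gregGt a = Gt"
    by (intro ext) (simp only: gregGt_def Gt_def gregG_def G_def D_def Lmx_def Lmy_def)
  show ?thesis
    unfolding Gt_eq Lmx_def Lmy_def D_def[symmetric] A_def[symmetric] B_def[symmetric]
    using generating_function Gt_symmetric by blast
qed

end
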